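(* Let $f:[0,1]\to[0,1]$ be a continuous function that does not admit a splitting sequence. If $0\le d<e\le 1$ and either $d$ and $e$ are both fixed points of $f$ or $\{d,e\}$ is a 2-cycle of $f$, then there is exactly one component $C$ of $f^{-1}((d,e))$ such that $f(C)=(d,e)$.
   Context: A 2-cycle is a set $\{s,t\}$ with $s\ne t$, $f(s)=t$, $f(t)=s$. A sequence $(T_n)_{n\in\mathbb N}$ of closed intervals $T_n\subsetneq[0,1]$ (possibly degenerate) is tight if $f(T_{n+1})=T_n$ for every $n$ and $T_n$ is nondegenerate for all sufficiently large $n$. A tight sequence $(T_n)$, $T_n=[l_n,r_n]$, is a splitting sequence admitted by $f$ if there are an infinite set $N\subseteq\mathbb N$ and nondegenerate closed intervals $S_n\subseteq[0,1]$ ($n\in N$) with $S_n\cap T_n\subseteq\{l_n,r_n\}$ and $f(S_n)=f(T_n)$ for all $n\in N$. *)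

theory Defs
  imports "HOL-Analysis.Analysis"
begin

text \<open>A closed interval T_n = [l n, r n] (possibly degenerate) is represented by its endpoints.\<close>

definition tight_seq :: "(real \<Rightarrow> real) \<Rightarrow> (nat \<Rightarrow> real) \<Rightarrow> (nat \<Rightarrow> real) \<Rightarrow> bool" where
  "tight_seq f l r \<longleftrightarrow>
     (\<forall>n. 0 \<le> l n \<and> l n \<le> r n \<and> r n \<le> 1 \<and> {l n..r n} \<noteq> {0..1}
          \<and> f ` {l (Suc n)..r (Suc n)} = {l n..r n})
     \<and> (\<exists>m. \<forall>n\<ge>m. l n < r n)"

definition splitting_seq :: "(real \<Rightarrow> real) \<Rightarrow> (nat \<Rightarrow> real) \<Rightarrow> (nat \<Rightarrow> real) \<Rightarrow> bool" where
  "splitting_seq f l r \<longleftrightarrow> tight_seq f l r \<and>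
     (\<exists>N :: nat set. infinite N \<and>
        (\<forall>n\<in>N. \<exists>a b. 0 \<le> a \<and> a < b \<and> b \<le> 1
             \<and> {a..b} \<inter> {l n..r n} \<subseteq> {l n, r n}
             \<and> f ` {a..b} = f ` {l n..r n}))"

definition admits_splitting_seq :: "(real \<Rightarrow> real) \<Rightarrow> bool" where
  "admits_splitting_seq f \<longleftrightarrow> (\<exists>l r. splitting_seq f l r)"

definition two_cycle :: "(real \<Rightarrow> real) \<Rightarrow> real \<Rightarrow> real \<Rightarrow> bool" where
  "two_cycle f s t \<longleftrightarrow> s \<noteq> t \<and> f s = t \<and> f t = s"

end

theory Submission
  imports Defs
begin

text \<open>
  Since f permutes the endpoints of [d, e], f([d, e]) covers [d, e], and a minimal
  subinterval mapped onto [d, e] lies, apart from its endpoints, in the preimage U of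
  (d, e); its component C0 stays inside (d, e) because d and e are not in U. The
  closure J of C0 satisfies J \<subseteq> [d, e] = f(J). A second component C with f(C) = (d, e)
  would have a closure K with f(K) = [d, e] meeting J at most in an endpoint. Pulling J
  back into itself again and again gives a tight sequence T_n inside J, and pulling
  T_(n-1) back into K gives the splitting intervals S_n.
\<close>

lemma connected_subset_greaterThanLessThan:
  fixes S :: "real set"
  assumes "connected S" "m \<in> S" "c < m" "m < c'" "c \<notin> S" "c' \<notin> S"
  shows "S \<subseteq> {c<..<c'}"
proof
  fix x assume "x \<in> S"
  have "{min m x..max m x} \<subseteq> S"
    using connected_contains_Icc[OF assms(1)] assms(2) \<open>x \<in> S\<close> by (simp add: min_def max_def)
  moreover have "c \<notin> {min m x..max m x}" "c' \<notin> {min m x..max m x}"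
    using calculation assms(5,6) by blast+
  ultimately show "x \<in> {c<..<c'}" using assms(3,4) by auto
qed

lemma exists_interval_avoiding_end_values:
  fixes f :: "real \<Rightarrow> real"
  assumes "x < y" "continuous_on {x..y} f" "f x \<noteq> f y"
  shows "\<exists>a b. x \<le> a \<and> a < b \<and> b \<le> y \<and> f a = f x \<and> f b = f y
           \<and> f x \<notin> f ` {a<..<b} \<and> f y \<notin> f ` {a<..<b}"
proof -
  \<comment> \<open>a is the last visit of the level f x, b the first visit of the level f y after a\<close>
  define A where "A = {t \<in> {x..y}. f t = f x}"
  define a where "a = Sup A"
  have "closed A" unfolding A_def
    by (rule continuous_closed_preimage_constant[OF assms(2)]) simp
  moreover have "x \<in> A" "bdd_above A" using assms(1) by (auto simp: A_def intro: bdd_aboveI[of _ y])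
  ultimately have "a \<in> A" unfolding a_def using closed_contains_Sup by blast
  have a_last: "t \<le> a" if "t \<in> A" for t
    unfolding a_def using that \<open>bdd_above A\<close> by (rule cSup_upper)
  have "a < y" using \<open>a \<in> A\<close> assms(3) by (auto simp: A_def less_le)
  define B where "B = {t \<in> {a..y}. f t = f y}"
  define b where "b = Inf B"
  have "closed B" unfolding B_def
    by (rule continuous_closed_preimage_constant[OF continuous_on_subset[OF assms(2)]])
       (use \<open>a \<in> A\<close> in \<open>auto simp: A_def\<close>)
  moreover have "y \<in> B" "bdd_below B" using \<open>a < y\<close> by (auto simp: B_def intro: bdd_belowI[of _ a])
  ultimately have "b \<in> B" unfolding b_def using closed_contains_Inf by blast
  have b_first: "b \<le> t" if "t \<in> B" for t
    unfolding b_def using that \<open>bdd_below B\<close> by (rule cInf_lower)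
  have "a < b" using \<open>a \<in> A\<close> \<open>b \<in> B\<close> assms(3) by (auto simp: A_def B_def less_le)
  have "f t \<noteq> f x" "f t \<noteq> f y" if "a < t" "t < b" for t
    using a_last[of t] b_first[of t] that \<open>a \<in> A\<close> \<open>b \<in> B\<close> by (auto simp: A_def B_def)
  then have "f x \<notin> f ` {a<..<b}" "f y \<notin> f ` {a<..<b}" by fastforce+
  then show ?thesis
    using \<open>a \<in> A\<close> \<open>b \<in> B\<close> \<open>a < b\<close> by (intro exI[of _ a] exI[of _ b]) (auto simp: A_def B_def)
qed

lemma exists_interval_between_values:
  fixes f :: "real \<Rightarrow> real"
  assumes cont: "continuous_on {a..b} f"
    and "c \<noteq> c'" "c \<in> f ` {a..b}" "c' \<in> f ` {a..b}"
  obtains a' b' where "a \<le> a'" "a' < b'" "b' \<le> b" "{f a', f b'} = {c, c'}"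
    "c \<notin> f ` {a'<..<b'}" "c' \<notin> f ` {a'<..<b'}"
proof -
  obtain x y where xy: "x \<in> {a..b}" "y \<in> {a..b}" "f x = c" "f y = c'"
    using assms(3,4) by blast
  then consider "x < y" | "y < x" using \<open>c \<noteq> c'\<close> by (cases "x = y") (auto simp: neq_iff)
  then show thesis
  proof cases
    case 1
    have "continuous_on {x..y} f" using xy by (intro continuous_on_subset[OF cont]) auto
    from exists_interval_avoiding_end_values[OF 1 this] obtain a' b' where
      "x \<le> a'" "a' < b'" "b' \<le> y" "f a' = c" "f b' = c'" "c \<notin> f ` {a'<..<b'}" "c' \<notin> f ` {a'<..<b'}"
      using xy \<open>c \<noteq> c'\<close> by auto
    with xy show thesis by (intro that[of a' b']) auto
  next
    case 2
    have "continuous_on {y..x} f" using xy by (intro continuous_on_subset[OF cont]) auto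
    from exists_interval_avoiding_end_values[OF 2 this] obtain a' b' where
      "y \<le> a'" "a' < b'" "b' \<le> x" "f a' = c'" "f b' = c" "c' \<notin> f ` {a'<..<b'}" "c \<notin> f ` {a'<..<b'}"
      using xy \<open>c \<noteq> c'\<close> by auto
    with xy show thesis by (intro that[of a' b']) auto
  qed
qed

lemma subinterval_with_image:
  fixes f :: "real \<Rightarrow> real"
  assumes cont: "continuous_on {a..b} f" and "c < c'" and cover: "{c..c'} \<subseteq> f ` {a..b}"
  obtains a' b' where "a \<le> a'" "a' < b'" "b' \<le> b"
    "f ` {a'<..<b'} = {c<..<c'}" "f ` {a'..b'} = {c..c'}"
proof -
  have "c \<noteq> c'" "c \<in> f ` {a..b}" "c' \<in> f ` {a..b}" using cover \<open>c < c'\<close> by auto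
  then obtain a' b' where ab': "a \<le> a'" "a' < b'" "b' \<le> b" "{f a', f b'} = {c, c'}"
    and avoid: "c \<notin> f ` {a'<..<b'}" "c' \<notin> f ` {a'<..<b'}"
    by (rule exists_interval_between_values[OF cont])
  have cont': "continuous_on {a'..b'} f" using ab' by (intro continuous_on_subset[OF cont]) auto
  have ends: "f ` {a'..b'} = {c, c'} \<union> f ` {a'<..<b'}"
  proof -
    have "{a'..b'} = {a', b'} \<union> {a'<..<b'}" using ab' by auto
    then have "f ` {a'..b'} = f ` {a', b'} \<union> f ` {a'<..<b'}" by (simp only: image_Un)
    also have "\<dots> = {c, c'} \<union> f ` {a'<..<b'}" using ab'(4) by simp
    finally show ?thesis .
  qed
  have covers: "{c..c'} \<subseteq> f ` {a'..b'}"
    by (rule connected_contains_Icc[OF connected_continuous_image[OF cont' connected_Icc]])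
       (use ends in auto)
  have between: "{c<..<c'} \<subseteq> f ` {a'<..<b'}"
  proof
    fix v assume v: "v \<in> {c<..<c'}"
    then have "v \<in> {c..c'}" by simp
    with covers have "v \<in> f ` {a'..b'}" by (rule subsetD)
    with ends v show "v \<in> f ` {a'<..<b'}" by auto
  qed
  have "f ` {a'<..<b'} \<subseteq> {c<..<c'}"
  proof (rule connected_subset_greaterThanLessThan[OF _ _ _ _ avoid])
    have "continuous_on {a'<..<b'} f" using cont' by (rule continuous_on_subset) auto
    then show "connected (f ` {a'<..<b'})" by (rule connected_continuous_image) simp
    show "(c + c') / 2 \<in> f ` {a'<..<b'}" using between \<open>c < c'\<close> by auto
  qed (use \<open>c < c'\<close> in auto)
  then have "f ` {a'<..<b'} = {c<..<c'}" using between by auto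
  moreover have "f ` {a'..b'} = {c..c'}" using ends calculation \<open>c < c'\<close> by auto
  ultimately show thesis by (rule that[OF ab'(1-3)])
qed

lemma Icc_subset_image_if_endpoints_permuted:
  fixes f :: "real \<Rightarrow> real"
  assumes "continuous_on {d..e} f" "d \<le> e" "{f d, f e} = {d, e}"
  shows "{d..e} \<subseteq> f ` {d..e}"
proof -
  have "{d, e} = f ` {d, e}" using assms(3) by simp
  also have "\<dots> \<subseteq> f ` {d..e}" using assms(2) by (intro image_mono) auto
  finally have "d \<in> f ` {d..e}" "e \<in> f ` {d..e}" by auto
  then show ?thesis
    by (rule connected_contains_Icc[OF connected_continuous_image[OF assms(1) connected_Icc]])
qed

lemma backward_orbit_of_subintervals:
  fixes f :: "real \<Rightarrow> real"
  assumes cont: "continuous_on {p..q} f" and "p < q" and cover: "{p..q} \<subseteq> f ` {p..q}"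
  obtains l r where "\<And>n. p \<le> l n \<and> l n < r n \<and> r n \<le> q"
    "\<And>n. f ` {l (Suc n)..r (Suc n)} = {l n..r n}"
proof -
  define inside where "inside ab \<longleftrightarrow> p \<le> fst ab \<and> fst ab < snd ab \<and> snd ab \<le> q" for ab :: "real \<times> real"
  have "\<exists>g. \<forall>n. inside (g n) \<and> f ` {fst (g (Suc n))..snd (g (Suc n))} = {fst (g n)..snd (g n)}"
  proof (rule dependent_nat_choice)
    show "\<exists>ab. inside ab" using \<open>p < q\<close> by (auto simp: inside_def intro: exI[of _ "(p, q)"])
  next
    fix ab :: "real \<times> real" assume "inside ab"
    then have "fst ab < snd ab" "{fst ab..snd ab} \<subseteq> f ` {p..q}"
      using cover by (auto simp: inside_def)
    then obtain a' b' where "p \<le> a'" "a' < b'" "b' \<le> q"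
      "f ` {a'<..<b'} = {fst ab<..<snd ab}" "f ` {a'..b'} = {fst ab..snd ab}"
      by (rule subinterval_with_image[OF cont])
    then show "\<exists>ab'. inside ab' \<and> f ` {fst ab'..snd ab'} = {fst ab..snd ab}"
      by (intro exI[of _ "(a', b')"]) (simp add: inside_def)
  qed
  then obtain g where "\<And>n. inside (g n)"
    "\<And>n. f ` {fst (g (Suc n))..snd (g (Suc n))} = {fst (g n)..snd (g n)}" by blast
  then show thesis by (intro that[of "fst \<circ> g" "snd \<circ> g"]) (auto simp: inside_def)
qed

lemma connected_image_greaterThanLessThan_closure:
  fixes f :: "real \<Rightarrow> real" and C :: "real set"
  assumes "connected C" "bounded C" "continuous_on (closure C) f" "f ` C = {d<..<e}" "d < e"
  obtains p q where "closure C = {p..q}" "p < q" "{p<..<q} \<subseteq> C" "f ` {p..q} = {d..e}"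
proof -
  have "connected (closure C) \<and> compact (closure C)"
    using connected_imp_connected_closure[OF assms(1)] assms(2) by simp
  then obtain p q where pq: "closure C = {p..q}"
    unfolding connected_compact_interval_1 by blast
  have "f ` {p..q} = {d..e}"
  proof
    have "f ` closure C \<subseteq> {d..e}"
      by (rule image_closure_subset[OF assms(3)]) (use assms(4) in auto)
    then show "f ` {p..q} \<subseteq> {d..e}" using pq by simp
    have "closed (f ` {p..q})"
      using assms(3) pq by (intro compact_imp_closed compact_continuous_image) auto
    then have "closure (f ` C) \<subseteq> f ` {p..q}"
      using closure_subset pq by (intro closure_minimal) auto
    then show "{d..e} \<subseteq> f ` {p..q}" using assms(4,5) by simp
  qed
  moreover have "p < q"
  proof (rule ccontr)
    assume "\<not> p < q"
    then have "{p..q} \<subseteq> {p}" by auto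
    then have "f ` {p..q} \<subseteq> {f p}" by auto
    moreover have "d \<in> f ` {p..q}" "e \<in> f ` {p..q}"
      using \<open>f ` {p..q} = {d..e}\<close> \<open>d < e\<close> by auto
    ultimately have "d = f p" "e = f p" by blast+
    with \<open>d < e\<close> show False by simp
  qed
  moreover have "{p<..<q} \<subseteq> C"
    using convex_interior_closure[of C] assms(1) pq interior_subset[of C]
    by (simp add: connected_convex_1)
  ultimately show thesis using pq that by simp
qed

lemma admits_splitting_seq_if_covered_twice:
  fixes f :: "real \<Rightarrow> real"
  assumes cont: "continuous_on {0..1} f"
    and J: "0 \<le> p" "p < q" "q \<le> 1" and K: "0 \<le> p'" "p' < q'" "q' \<le> 1"
    and apart: "q \<le> p' \<or> q' \<le> p"
    and self_cover: "{p..q} \<subseteq> f ` {p..q}" and cover: "{p..q} \<subseteq> f ` {p'..q'}"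
  shows "admits_splitting_seq f"
proof -
  have cont_J: "continuous_on {p..q} f" and cont_K: "continuous_on {p'..q'} f"
    using J K by (auto intro: continuous_on_subset[OF cont])
  obtain l r where lr: "\<And>n. p \<le> l n \<and> l n < r n \<and> r n \<le> q"
    and pullback: "\<And>n. f ` {l (Suc n)..r (Suc n)} = {l n..r n}"
    by (fact backward_orbit_of_subintervals[OF cont_J J(2) self_cover])
  have "{l n..r n} \<noteq> {0..1}" for n
    using lr[of n] J K apart by (auto simp: Icc_eq_Icc)
  then have tight: "tight_seq f l r"
    unfolding tight_seq_def using lr J pullback by (auto intro: order_trans less_imp_le)
  \<comment> \<open>f(T_0) need not lie in [p, q], so splitting intervals S_n exist only for n \<ge> 1\<close>
  have "\<exists>a b. 0 \<le> a \<and> a < b \<and> b \<le> 1 \<and> {a..b} \<inter> {l n..r n} \<subseteq> {l n, r n}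
          \<and> f ` {a..b} = f ` {l n..r n}" if "n \<in> range Suc" for n
  proof -
    from that obtain m where n: "n = Suc m" by blast
    have "l m < r m" "{l m..r m} \<subseteq> f ` {p'..q'}" using lr[of m] cover by auto
    then obtain a b where ab: "p' \<le> a" "a < b" "b \<le> q'"
      "f ` {a<..<b} = {l m<..<r m}" "f ` {a..b} = {l m..r m}"
      by (rule subinterval_with_image[OF cont_K])
    have "{a..b} \<inter> {l n..r n} \<subseteq> {l n, r n}" using ab lr[of n] apart by auto
    then show ?thesis using ab K pullback[of m] n by (intro exI[of _ a] exI[of _ b]) auto
  qed
  moreover have "infinite (range Suc)" by (simp add: range_inj_infinite)
  ultimately have "splitting_seq f l r" unfolding splitting_seq_def using tight by blast
  then show ?thesis unfolding admits_splitting_seq_def by blast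
qed

lemma admits_splitting_seq_if_two_components_onto:
  fixes f :: "real \<Rightarrow> real" and d e :: real
  defines "U \<equiv> {x \<in> {0..1}. f x \<in> {d<..<e}}"
  assumes cont: "continuous_on {0..1} f" and "d < e"
    and C: "C \<in> components U" "f ` C = {d<..<e}" "C \<subseteq> {d..e}"
    and C': "C' \<in> components U" "f ` C' = {d<..<e}" and "C \<noteq> C'"
  shows "admits_splitting_seq f"
proof -
  have closure_unit: "closure D \<subseteq> {0..1}" if "D \<in> components U" for D
  proof (rule closure_minimal)
    show "D \<subseteq> {0..1}" using in_components_subset[OF that] unfolding U_def by blast
  qed simp
  have closure_interval: "\<exists>p q. closure D = {p..q} \<and> p < q \<and> {p<..<q} \<subseteq> D
                              \<and> f ` {p..q} = {d..e} \<and> {p..q} \<subseteq> {0..1}"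
    if D: "D \<in> components U" "f ` D = {d<..<e}" for D
  proof -
    have "bounded D" using closure_unit[OF D(1)] closure_subset
      by (meson bounded_closed_interval bounded_subset order_trans)
    moreover have "continuous_on (closure D) f"
      using cont closure_unit[OF D(1)] by (rule continuous_on_subset)
    ultimately obtain p q where "closure D = {p..q}" "p < q" "{p<..<q} \<subseteq> D" "f ` {p..q} = {d..e}"
      using connected_image_greaterThanLessThan_closure[OF in_components_connected[OF D(1)]]
        D(2) \<open>d < e\<close> by blast
    then show ?thesis using closure_unit[OF D(1)] by blast
  qed
  obtain p q where pq: "closure C = {p..q}" "p < q" "{p<..<q} \<subseteq> C"
      "f ` {p..q} = {d..e}" "{p..q} \<subseteq> {0..1}"
    using closure_interval[OF C(1,2)] by blast
  obtain p' q' where pq': "p' < q'" "{p'<..<q'} \<subseteq> C'"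
      "f ` {p'..q'} = {d..e}" "{p'..q'} \<subseteq> {0..1}"
    using closure_interval[OF C'] by blast
  have disjoint: "{p<..<q} \<inter> {p'<..<q'} = {}"
    using components_nonoverlap[OF C(1) C'(1)] \<open>C \<noteq> C'\<close> pq(3) pq'(2) by blast
  have apart: "q \<le> p' \<or> q' \<le> p"
  proof (rule ccontr)
    assume "\<not> (q \<le> p' \<or> q' \<le> p)"
    then have "(max p p' + min q q') / 2 \<in> {p<..<q} \<inter> {p'<..<q'}"
      using pq(2) pq'(1) by auto
    with disjoint show False by blast
  qed
  have "{p..q} \<subseteq> {d..e}" using closure_minimal[OF C(3)] pq(1) by simp
  then show ?thesis
    using admits_splitting_seq_if_covered_twice[OF cont _ pq(2) _ _ pq'(1) _ apart] pq pq'
    by auto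
qed

lemma component_onto_inside_Icc:
  fixes f :: "real \<Rightarrow> real" and d e :: real
  defines "U \<equiv> {x \<in> {0..1}. f x \<in> {d<..<e}}"
  assumes cont: "continuous_on {0..1} f" and de: "0 \<le> d" "d < e" "e \<le> 1"
    and ends: "{f d, f e} = {d, e}"
  obtains C0 where "C0 \<in> components U" "f ` C0 = {d<..<e}" "C0 \<subseteq> {d..e}"
proof -
  have cont_de: "continuous_on {d..e} f"
    using de by (intro continuous_on_subset[OF cont]) auto
  then have cover: "{d..e} \<subseteq> f ` {d..e}"
    using Icc_subset_image_if_endpoints_permuted ends \<open>d < e\<close> by simp
  obtain a b where ab: "d \<le> a" "a < b" "b \<le> e" "f ` {a<..<b} = {d<..<e}"
    and "f ` {a..b} = {d..e}"
    by (rule subinterval_with_image[OF cont_de \<open>d < e\<close> cover])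
  define m where "m = (a + b) / 2"
  define C0 where "C0 = connected_component_set U m"
  have m: "m \<in> {a<..<b}" using ab(2) by (simp add: m_def)
  have "{a<..<b} \<subseteq> U" using ab de unfolding U_def by auto
  then have C0: "C0 \<in> components U" "{a<..<b} \<subseteq> C0"
    unfolding C0_def using m by (blast intro: componentsI, intro connected_component_maximal) auto
  have "C0 \<subseteq> U" unfolding C0_def by (rule connected_component_subset)
  then have "f ` C0 = {d<..<e}" using ab(4) C0(2) unfolding U_def by blast
  moreover have "C0 \<subseteq> {d..e}"
  proof -
    have "f d \<in> {d, e}" "f e \<in> {d, e}" using ends by blast+
    then have "d \<notin> C0" "e \<notin> C0" using \<open>C0 \<subseteq> U\<close> unfolding U_def by auto
    moreover have "m \<in> C0" "d < m" "m < e" using m C0(2) ab by auto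
    ultimately show ?thesis
      using connected_subset_greaterThanLessThan[OF in_components_connected[OF C0(1)]] by fastforce
  qed
  ultimately show thesis using C0(1) that by blast
qed

theorem lemma3p11:
  fixes f :: "real \<Rightarrow> real" and d e :: real
  assumes "continuous_on {0..1} f"
    and "f ` {0..1} \<subseteq> {0..1}"
    and "\<not> admits_splitting_seq f"
    and "0 \<le> d" "d < e" "e \<le> 1"
    and "(f d = d \<and> f e = e) \<or> two_cycle f d e"
  shows "\<exists>!C. C \<in> components {x \<in> {0..1}. f x \<in> {d<..<e}} \<and> f ` C = {d<..<e}"
proof -
  have "{f d, f e} = {d, e}"
    using assms(7) by (auto simp: two_cycle_def insert_commute)
  then obtain C0 where C0: "C0 \<in> components {x \<in> {0..1}. f x \<in> {d<..<e}}"
      "f ` C0 = {d<..<e}" "C0 \<subseteq> {d..e}"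
    by (rule component_onto_inside_Icc[OF assms(1,4-6)])
  have "C = C0" if "C \<in> components {x \<in> {0..1}. f x \<in> {d<..<e}}" "f ` C = {d<..<e}" for C
    using admits_splitting_seq_if_two_components_onto[OF assms(1,5) C0] that assms(3) by blast
  with C0 show ?thesis by blast
qed

end
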